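(* Let $A\in\mathbb{R}^{n\times n}$, $G\in\mathbb{R}^{n\times n}$, $C\in\mathbb{R}^{p\times n}$, $H$ with $HH^{\top}>0$, $(A,G,C)$ controllable and observable, and $r\in\{1,\dots,n-1\}$ with $\mathrm{Re}(\lambda_r(A))>\mathrm{Re}(\lambda_{r+1}(A))$. Let $\bar U\in\mathcal{U}$, $A_{\bar U}=\bar U^{\top}A\bar U$, $C_{\bar U}=C\bar U$, $G_{\bar U}=\bar U^{\top}G$, let $\tilde R_{\bar U}\in\mathbb{R}^{r\times r}$ be the unique positive definite solution of $A_{\bar U}R+RA_{\bar U}^{\top}+G_{\bar U}G_{\bar U}^{\top}-RC_{\bar U}^{\top}(HH^{\top})^{-1}C_{\bar U}R=0$, and let $\tilde P_r=\bar U\tilde R_{\bar U}\bar U^{\top}$. Let $\sigma_1,\dots,\sigma_r$ be the eigenvalues of $A_{\bar U}-\tilde R_{\bar U}C_{\bar U}^{\top}(HH^{\top})^{-1}C_{\bar U}$. Then the eigenvalues of $A-\tilde P_rC^{\top}(HH^{\top})^{-1}C$ are $\sigma_1,\dots,\sigma_r,\lambda_{r+1}(A),\dots,\lambda_n(A)$.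
   Context: $\mathrm{St}(r,n):=\{X\in\mathbb{R}^{n\times r}\mid X^{\top}X=I_r\}$. Eigenvalues of $A$ are ordered as $\mathrm{Re}(\lambda_1(A))\ge\dots\ge\mathrm{Re}(\lambda_n(A))$ with multiplicity. $\Psi=[\psi_1,\dots,\psi_n]$ is an invertible matrix of unit-norm (generalized) eigenvectors of $A$ with $\Psi^{-1}A\Psi$ the Jordan form. $\mathcal{U}:=\{U\in\mathrm{St}(r,n)\mid \Psi^{-1}U=\begin{bsmallmatrix}K\\ O_{n-r,r}\end{bsmallmatrix}\text{ for some }K\in\mathbb{C}^{r\times r}\}$. *)

theory Defs
  imports "Jordan_Normal_Form.Jordan_Normal_Form" "Jordan_Normal_Form.DL_Rank"
    "Jordan_Normal_Form.Gauss_Jordan_Elimination"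
begin

text \<open>Matrix inverse (only used for invertible square matrices).\<close>
definition minv :: "'a :: field mat \<Rightarrow> 'a mat" where
  "minv M = the (mat_inverse M)"

definition pos_def_mat :: "nat \<Rightarrow> real mat \<Rightarrow> bool" where
  "pos_def_mat k M \<longleftrightarrow> M \<in> carrier_mat k k \<and> transpose_mat M = M \<and>
     (\<forall>x \<in> carrier_vec k. x \<noteq> 0\<^sub>v k \<longrightarrow> x \<bullet> (M *\<^sub>v x) > 0)"

text \<open>Kalman controllability matrix [G, AG, ..., A^(n-1) G] for A n x n, G n x m.\<close>
definition ctrb_mat :: "real mat \<Rightarrow> real mat \<Rightarrow> real mat" where
  "ctrb_mat A G = (let n = dim_row A; m = dim_col G in
     mat n (n * m) (\<lambda>(i, j). ((A ^\<^sub>m (j div m)) * G) $$ (i, j mod m)))"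

definition controllable :: "real mat \<Rightarrow> real mat \<Rightarrow> bool" where
  "controllable A G \<longleftrightarrow> vec_space.rank (dim_row A) (ctrb_mat A G :: real mat) = dim_row A"

text \<open>(C,A) observable iff (A^T, C^T) controllable (rank of [C; CA; ...; CA^(n-1)] is n).\<close>
definition observable :: "real mat \<Rightarrow> real mat \<Rightarrow> bool" where
  "observable A C \<longleftrightarrow> controllable (transpose_mat A) (transpose_mat C)"

definition cplx :: "real mat \<Rightarrow> complex mat" where
  "cplx M = map_mat complex_of_real M"

end

theory Submission
  imports Defs
begin

(* The hypothesis on \<Psi>^-1 U says that the columns of U span the A-invariant subspace spanned by
   the generalized eigenvectors \<psi>_1, ..., \<psi>_r; since U^T U = I this gives A U = U (U^T A U).
   The subspace is then also invariant under A - U Y for every Y, in particular for the gain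
   Y = R U^T C^T (H H^T)^-1 C, with (A - U Y) U = U (U^T A U - Y U). So \<Psi>^-1 (A - U Y) \<Psi> is block
   upper triangular: its upper-left block is similar to U^T A U - Y U, and its lower-right block is
   that of the Jordan form, whose diagonal is \<lambda>_(r+1), ..., \<lambda>_n. *)

definition inclusion_mat :: "nat \<Rightarrow> nat \<Rightarrow> 'a :: zero_neq_one mat" where
  "inclusion_mat n k = mat n k (\<lambda>(i, j). if i = j then 1 else 0)"

lemma inclusion_mat_carrier [simp]: "inclusion_mat n k \<in> carrier_mat n k"
  by (simp add: inclusion_mat_def)

lemma dim_inclusion_mat [simp]:
  "dim_row (inclusion_mat n k) = n" "dim_col (inclusion_mat n k) = k"
  by (simp_all add: inclusion_mat_def)

lemma index_inclusion_mat [simp]: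
  "i < n \<Longrightarrow> j < k \<Longrightarrow> inclusion_mat n k $$ (i, j) = (if i = j then 1 else 0)"
  by (simp add: inclusion_mat_def)

lemma mult_inclusion_mat:
  fixes X :: "'a :: semiring_1 mat"
  assumes "dim_col X = n" "k \<le> n"
  shows "X * inclusion_mat n k = mat (dim_row X) k (\<lambda>(i, j). X $$ (i, j))"
  using assms by (intro eq_matI) (auto simp: scalar_prod_def if_distrib[of "(*) _"] cong: if_cong)

lemma transpose_inclusion_mat_mult:
  fixes X :: "'a :: semiring_1 mat"
  assumes "dim_row X = n" "k \<le> n"
  shows "transpose_mat (inclusion_mat n k) * X = mat k (dim_col X) (\<lambda>(i, j). X $$ (i, j))"
  using assms by (intro eq_matI) (auto simp: scalar_prod_def if_distrib[of "\<lambda>x. x * _"] cong: if_cong)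

lemma inclusion_mat_mult:
  fixes X :: "'a :: semiring_1 mat"
  assumes "dim_row X = k" "k \<le> n"
  shows "inclusion_mat n k * X = mat n (dim_col X) (\<lambda>(i, j). if i < k then X $$ (i, j) else 0)"
  using assms by (intro eq_matI) (auto simp: scalar_prod_def if_distrib[of "\<lambda>x. x * _"] cong: if_cong)

lemma transpose_inclusion_mat_mult_inclusion_mat:
  assumes "k \<le> n"
  shows "transpose_mat (inclusion_mat n k) * inclusion_mat n k = (1\<^sub>m k :: 'a :: semiring_1 mat)"
  using assms by (auto simp: transpose_inclusion_mat_mult)

lemma compress_inclusion_mat:
  fixes T :: "'a :: semiring_1 mat"
  assumes "T \<in> carrier_mat n n" "k \<le> n"
  shows "transpose_mat (inclusion_mat n k) * T * inclusion_mat n k = mat k k (\<lambda>(i, j). T $$ (i, j))"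
  using assms by (auto simp: transpose_inclusion_mat_mult mult_inclusion_mat)

lemma lower_zero_imp_eq_inclusion_mat_mult:
  fixes B :: "'a :: semiring_1 mat"
  assumes "B \<in> carrier_mat n k" "k \<le> n"
    and "\<And>i j. k \<le> i \<Longrightarrow> i < n \<Longrightarrow> j < k \<Longrightarrow> B $$ (i, j) = 0"
  shows "B = inclusion_mat n k * (transpose_mat (inclusion_mat n k) * B)"
  using assms by (auto simp: transpose_inclusion_mat_mult inclusion_mat_mult mat_eq_iff)

definition block_upper_triangular :: "nat \<Rightarrow> 'a :: zero mat \<Rightarrow> bool" where
  "block_upper_triangular k T \<longleftrightarrow> (\<forall>i j. k \<le> i \<and> i < dim_row T \<and> j < k \<longrightarrow> T $$ (i, j) = 0)"

definition lower_right_block :: "nat \<Rightarrow> 'a mat \<Rightarrow> 'a mat" where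
  "lower_right_block k T = mat (dim_row T - k) (dim_col T - k) (\<lambda>(i, j). T $$ (i + k, j + k))"

lemma block_upper_triangular_iff_mult_inclusion_mat:
  fixes T :: "'a :: semiring_1 mat"
  assumes T: "T \<in> carrier_mat n n" and "k \<le> n"
  shows "block_upper_triangular k T \<longleftrightarrow>
    T * inclusion_mat n k = inclusion_mat n k * (transpose_mat (inclusion_mat n k) * T * inclusion_mat n k)"
  using assms unfolding block_upper_triangular_def compress_inclusion_mat[OF assms]
  by (auto simp: mult_inclusion_mat inclusion_mat_mult mat_eq_iff)

lemma char_poly_block_upper_triangular:
  fixes T :: "'a :: idom mat"
  assumes T: "T \<in> carrier_mat n n" and k: "k \<le> n" and "block_upper_triangular k T"
  shows "char_poly T = char_poly (transpose_mat (inclusion_mat n k) * T * inclusion_mat n k)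
    * char_poly (lower_right_block k T)"
proof -
  let ?T1 = "mat k k (\<lambda>(i, j). T $$ (i, j))"
  have dims: "dim_row T = n" "dim_col T = n" using T by auto
  have "char_poly_matrix T = four_block_mat (char_poly_matrix ?T1)
      (mat k (n - k) (\<lambda>(i, j). [:- T $$ (i, j + k):])) (0\<^sub>m (n - k) k)
      (char_poly_matrix (lower_right_block k T))"
    using assms unfolding block_upper_triangular_def lower_right_block_def
    by (intro eq_matI) (auto simp: char_poly_matrix_def)
  then show ?thesis
    unfolding char_poly_def compress_inclusion_mat[OF T k]
    by (simp add: det_four_block_mat_lower_left_zero[of _ k _ "n - k"] lower_right_block_def dims)
qed

lemma char_poly_conjugate:
  fixes M P Q :: "'a :: comm_ring_1 mat"
  assumes "M \<in> carrier_mat n n" "P \<in> carrier_mat n n" "Q \<in> carrier_mat n n"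
    and "P * Q = 1\<^sub>m n" "Q * P = 1\<^sub>m n"
  shows "char_poly (Q * M * P) = char_poly M"
proof -
  have "M = (P * Q) * M * (P * Q)"
    using assms by simp
  also have "\<dots> = P * (Q * M * P) * Q"
    using assms(1-3) by (simp add: assoc_mult_mat[of _ n n _ n _ n])
  finally have "M = P * (Q * M * P) * Q" .
  with assms have "similar_mat M (Q * M * P)"
    unfolding similar_mat_def by (intro exI[of _ P] exI[of _ Q] similar_mat_witI[of P Q n]) auto
  then show ?thesis by (rule char_poly_similar[symmetric])
qed

lemma assoc_mult_mat_dims:
  assumes "dim_col A = dim_row B" "dim_col B = dim_row C"
  shows "A * B * C = A * (B * C)"
proof -
  have "B \<in> carrier_mat (dim_col A) (dim_col B)" "C \<in> carrier_mat (dim_col B) (dim_col C)"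
    using assms by (auto intro: carrier_matI)
  then show ?thesis by (rule assoc_mult_mat[OF carrier_mat_triv])
qed

lemma first_columns_eq_range_mult:
  fixes S S' U L K :: "'a :: field mat"
  assumes S: "S \<in> carrier_mat n n" "S' \<in> carrier_mat n n" "S * S' = 1\<^sub>m n"
    and U: "U \<in> carrier_mat n r" "L \<in> carrier_mat r n" "L * U = 1\<^sub>m r"
    and K: "K \<in> carrier_mat r r" "S' * U = inclusion_mat n r * K"
  shows "L * S * inclusion_mat n r * K = 1\<^sub>m r" "K * (L * S * inclusion_mat n r) = 1\<^sub>m r"
    "S * inclusion_mat n r = U * (L * S * inclusion_mat n r)"
proof -
  let ?E = "inclusion_mat n r :: 'a mat"
  let ?V = "L * S * ?E"
  have V: "?V \<in> carrier_mat r r"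
    by (rule mult_carrier_mat[OF mult_carrier_mat[OF U(2) S(1)] inclusion_mat_carrier])
  note dims = carrier_matD[OF S(1)] carrier_matD[OF S(2)] carrier_matD[OF U(1)]
    carrier_matD[OF U(2)] carrier_matD[OF K(1)] carrier_matD[OF V]
  have "U = S * S' * U" using S U by simp
  also have "\<dots> = S * (?E * K)" using dims by (simp add: assoc_mult_mat_dims K(2))
  finally have U_eq: "U = S * (?E * K)" .
  have "?V * K = L * U" unfolding U_eq using dims by (simp add: assoc_mult_mat_dims)
  then show VK: "?V * K = 1\<^sub>m r" using U(3) by simp
  then show KV: "K * ?V = 1\<^sub>m r" by (rule mat_mult_left_right_inverse[OF V K(1)])
  have "S * ?E = S * ?E * (K * ?V)" using KV dims by simp
  also have "\<dots> = U * ?V" unfolding U_eq using dims by (simp add: assoc_mult_mat_dims)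
  finally show "S * ?E = U * ?V" .
qed

lemma range_invariant_of_block_upper_triangular:
  fixes A S S' U L K V :: "'a :: field mat"
  assumes A: "A \<in> carrier_mat n n"
    and S: "S \<in> carrier_mat n n" "S' \<in> carrier_mat n n" "S * S' = 1\<^sub>m n"
    and U: "U \<in> carrier_mat n r" "L \<in> carrier_mat r n" "L * U = 1\<^sub>m r"
    and KV: "K \<in> carrier_mat r r" "V \<in> carrier_mat r r"
      "S' * U = inclusion_mat n r * K" "S * inclusion_mat n r = U * V"
    and r: "r \<le> n" and J: "block_upper_triangular r (S' * A * S)"
  shows "A * U = U * (L * A * U)"
proof -
  let ?E = "inclusion_mat n r :: 'a mat"
  let ?J11 = "transpose_mat ?E * (S' * A * S) * ?E"
  have J11: "?J11 \<in> carrier_mat r r"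
    using A S by (meson mult_carrier_mat transpose_carrier_mat inclusion_mat_carrier)
  have JE: "S' * A * S * ?E = ?E * ?J11"
    using J block_upper_triangular_iff_mult_inclusion_mat[of "S' * A * S" n r] A S r by auto
  note dims = carrier_matD[OF A] carrier_matD[OF S(1)] carrier_matD[OF S(2)]
    carrier_matD[OF U(1)] carrier_matD[OF U(2)] carrier_matD[OF KV(1)] carrier_matD[OF KV(2)]
    carrier_matD[OF J11]
  have "U = S * S' * U" using S U by simp
  also have "\<dots> = S * (?E * K)" using dims by (simp add: assoc_mult_mat_dims KV(3))
  finally have U_eq: "U = S * (?E * K)" .
  have "A * U = A * S * ?E * K" unfolding U_eq using dims by (simp add: assoc_mult_mat_dims)
  also have "\<dots> = S * (S' * A * S * ?E) * K"
    using dims S(3) by (simp add: assoc_mult_mat_dims[symmetric])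
  also have "\<dots> = S * ?E * (?J11 * K)" unfolding JE using dims by (simp add: assoc_mult_mat_dims)
  also have "\<dots> = U * (V * ?J11 * K)" using dims by (simp add: KV(4) assoc_mult_mat_dims)
  finally have AU: "A * U = U * (V * ?J11 * K)" .
  then have "L * A * U = L * U * (V * ?J11 * K)" using dims by (simp add: assoc_mult_mat_dims)
  also have "\<dots> = V * ?J11 * K" using dims U(3) by simp
  finally show ?thesis using AU by simp
qed

(* S E = U V says that the first r columns of S span the range of U; as M U = U N, conjugating M
   by S gives a block upper triangular matrix with upper-left block K N V, which is similar to N. *)
lemma char_poly_of_invariant_range:
  fixes M N S S' U K V :: "'a :: field mat"
  assumes M: "M \<in> carrier_mat n n" "N \<in> carrier_mat r r" "M * U = U * N"
    and S: "S \<in> carrier_mat n n" "S' \<in> carrier_mat n n" "S * S' = 1\<^sub>m n" "S' * S = 1\<^sub>m n"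
    and U: "U \<in> carrier_mat n r"
    and KV: "K \<in> carrier_mat r r" "V \<in> carrier_mat r r" "K * V = 1\<^sub>m r" "V * K = 1\<^sub>m r"
      "S' * U = inclusion_mat n r * K" "S * inclusion_mat n r = U * V"
    and r: "r \<le> n"
  shows "char_poly M = char_poly N * char_poly (lower_right_block r (S' * M * S))"
proof -
  let ?E = "inclusion_mat n r :: 'a mat"
  let ?T = "S' * M * S"
  have T: "?T \<in> carrier_mat n n" using M S by simp
  note dims = carrier_matD[OF M(1)] carrier_matD[OF M(2)] carrier_matD[OF S(1)]
    carrier_matD[OF S(2)] carrier_matD[OF U] carrier_matD[OF KV(1)] carrier_matD[OF KV(2)]
  have "?T * ?E = S' * (M * U) * V" using dims by (simp add: KV(6) assoc_mult_mat_dims)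
  also have "\<dots> = S' * U * N * V" using dims by (simp add: M(3) assoc_mult_mat_dims)
  also have "\<dots> = ?E * (K * N * V)" using dims by (simp add: KV(5) assoc_mult_mat_dims)
  finally have TE: "?T * ?E = ?E * (K * N * V)" .
  have "transpose_mat ?E * ?T * ?E = transpose_mat ?E * (?T * ?E)"
    using dims by (simp add: assoc_mult_mat_dims)
  also have "\<dots> = transpose_mat ?E * ?E * (K * N * V)"
    unfolding TE using dims by (simp add: assoc_mult_mat_dims)
  also have "\<dots> = K * N * V" using dims r by (simp add: transpose_inclusion_mat_mult_inclusion_mat)
  finally have T11: "transpose_mat ?E * ?T * ?E = K * N * V" .
  have "block_upper_triangular r ?T"
    using block_upper_triangular_iff_mult_inclusion_mat[OF T r] TE T11 by simp
  then have "char_poly ?T = char_poly (K * N * V) * char_poly (lower_right_block r ?T)"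
    using char_poly_block_upper_triangular[OF T r] T11 by simp
  moreover have "char_poly ?T = char_poly M" by (rule char_poly_conjugate[OF M(1) S])
  moreover have "char_poly (K * N * V) = char_poly N" by (rule char_poly_conjugate[OF M(2) KV(2,1,4,3)])
  ultimately show ?thesis by simp
qed

lemma char_poly_minus_mult_of_invariant_range:
  fixes A S S' U L Y :: "'a :: field mat"
  assumes A: "A \<in> carrier_mat n n"
    and S: "S \<in> carrier_mat n n" "S' \<in> carrier_mat n n" "S * S' = 1\<^sub>m n" "S' * S = 1\<^sub>m n"
    and U: "U \<in> carrier_mat n r" "L \<in> carrier_mat r n" "L * U = 1\<^sub>m r"
    and Y: "Y \<in> carrier_mat r n" and r: "r \<le> n"
    and J: "block_upper_triangular r (S' * A * S)"
    and U_lower: "\<And>i j. r \<le> i \<Longrightarrow> i < n \<Longrightarrow> j < r \<Longrightarrow> (S' * U) $$ (i, j) = 0"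
  shows "char_poly (A - U * Y)
    = char_poly (L * A * U - Y * U) * char_poly (lower_right_block r (S' * A * S))"
proof -
  let ?E = "inclusion_mat n r :: 'a mat"
  define K where "K = transpose_mat ?E * (S' * U)"
  define V where "V = L * S * ?E"
  have K: "K \<in> carrier_mat r r" and V: "V \<in> carrier_mat r r"
    unfolding K_def V_def using S U by (auto intro!: mult_carrier_mat[of _ r n] simp del: mult_carrier_mat)
  have SU: "S' * U = ?E * K"
    unfolding K_def using S U r U_lower by (intro lower_zero_imp_eq_inclusion_mat_mult mult_carrier_mat)
  note basis = first_columns_eq_range_mult[OF S(1-3) U K SU, folded V_def]
  have AU: "A * U = U * (L * A * U)"
    by (rule range_invariant_of_block_upper_triangular[OF A S(1-3) U K V SU basis(3) r J])
  have LAU: "L * A * U \<in> carrier_mat r r" and YU: "Y * U \<in> carrier_mat r r"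
    using A U Y by (meson mult_carrier_mat)+
  have M: "A - U * Y \<in> carrier_mat n n" and N: "L * A * U - Y * U \<in> carrier_mat r r"
    using U Y LAU YU by (meson minus_carrier_mat mult_carrier_mat)+
  have "(A - U * Y) * U = A * U - U * Y * U"
    using A U Y by (simp add: minus_mult_distrib_mat[of _ n n])
  also have "\<dots> = U * (L * A * U - Y * U)"
    using U Y LAU YU by (simp add: AU mult_minus_distrib_mat[of _ n r] assoc_mult_mat[of _ n r _ n _ r])
  finally have MU: "(A - U * Y) * U = U * (L * A * U - Y * U)" .
  note dims = carrier_matD[OF S(1)] carrier_matD[OF S(2)] carrier_matD[OF U(1)]
    carrier_matD[OF Y] carrier_matD[OF K]
  have "S' * (U * Y) * S = S' * U * Y * S" using dims by (simp add: assoc_mult_mat_dims)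
  then have SUYS: "S' * (U * Y) * S = ?E * (K * (Y * S))"
    using dims by (simp add: SU assoc_mult_mat_dims)
  have "S' * (A - U * Y) * S = S' * A * S - ?E * (K * (Y * S))"
    using A S U Y by (simp add: mult_minus_distrib_mat[of _ n n] minus_mult_distrib_mat[of _ n n] SUYS)
  then have "lower_right_block r (S' * (A - U * Y) * S) = lower_right_block r (S' * A * S)"
    using A S Y K r by (auto simp: lower_right_block_def inclusion_mat_mult)
  moreover have "char_poly (A - U * Y)
      = char_poly (L * A * U - Y * U) * char_poly (lower_right_block r (S' * (A - U * Y) * S))"
    by (rule char_poly_of_invariant_range[OF M N MU S U(1) K V basis(2,1) SU basis(3) r])
  ultimately show ?thesis by simp
qed

lemma upper_triangular_imp_block_upper_triangular:
  "upper_triangular T \<Longrightarrow> block_upper_triangular k T"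
  unfolding upper_triangular_def block_upper_triangular_def by auto

lemma char_poly_lower_right_block_upper_triangular:
  fixes T :: "'a :: comm_ring_1 mat"
  assumes T: "T \<in> carrier_mat n n" and "upper_triangular T" and "k \<le> n"
  shows "char_poly (lower_right_block k T) = (\<Prod>i = k..<n. [:- T $$ (i, i), 1:])"
proof -
  let ?T22 = "lower_right_block k T"
  have T22: "?T22 \<in> carrier_mat (n - k) (n - k)" using T by (simp add: lower_right_block_def)
  have "upper_triangular ?T22"
    using assms unfolding upper_triangular_def lower_right_block_def by auto
  then have "char_poly ?T22 = (\<Prod>a\<leftarrow>diag_mat ?T22. [:- a, 1:])"
    by (rule char_poly_upper_triangular[OF T22])
  also have "diag_mat ?T22 = map (\<lambda>i. T $$ (k + i, k + i)) [0..<n - k]"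
    using T unfolding diag_mat_def lower_right_block_def by (auto simp: add.commute)
  also have "(\<Prod>a\<leftarrow>map (\<lambda>i. T $$ (k + i, k + i)) [0..<n - k]. [:- a, 1:])
      = (\<Prod>i = k..<n. [:- T $$ (i, i), 1:])"
    by (simp add: prod.atLeastLessThan_shift_0[of _ k n] prod.distinct_set_conv_list[symmetric] o_def)
  finally show ?thesis .
qed

lemma pos_def_mat_det_nonzero:
  assumes "pos_def_mat k M"
  shows "det M \<noteq> 0"
proof
  have M: "M \<in> carrier_mat k k" using assms by (simp add: pos_def_mat_def)
  assume "det M = 0"
  then obtain v where v: "v \<in> carrier_vec k" "v \<noteq> 0\<^sub>v k" "M *\<^sub>v v = 0\<^sub>v k"
    using det_0_iff_vec_prod_zero[OF M] by blast
  then have "v \<bullet> (M *\<^sub>v v) > 0" using assms unfolding pos_def_mat_def by blast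
  with v show False by simp
qed

lemma invertible_mat_det_nonzero:
  fixes M :: "'a :: comm_ring_1 mat"
  assumes M: "M \<in> carrier_mat n n" and "invertible_mat M"
  shows "det M \<noteq> 0"
proof -
  obtain M' where "inverts_mat M M'" "inverts_mat M' M"
    using assms(2) unfolding invertible_mat_def by blast
  then have MM': "M * M' = 1\<^sub>m n" and M'M: "M' * M = 1\<^sub>m (dim_row M')"
    using carrier_matD[OF M] unfolding inverts_mat_def by simp_all
  have "dim_row M' = n" "dim_col M' = n"
    using arg_cong[OF M'M, of dim_col] arg_cong[OF MM', of dim_col] carrier_matD[OF M] by simp_all
  then have M': "M' \<in> carrier_mat n n" by (rule carrier_matI)
  have "det M * det M' = 1"
    using det_mult[OF M M'] MM' by simp
  then show ?thesis by auto
qed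

lemma minv_inverse:
  fixes M :: "'a :: field mat"
  assumes M: "M \<in> carrier_mat k k" and "det M \<noteq> 0"
  shows "minv M \<in> carrier_mat k k" "M * minv M = 1\<^sub>m k" "minv M * M = 1\<^sub>m k"
proof -
  have "M \<in> Units (ring_mat TYPE('a) k undefined)" by (rule det_non_zero_imp_unit[OF assms])
  then have "mat_inverse M \<noteq> None" using mat_inverse(1)[OF M, of undefined] by blast
  then obtain M' where M': "mat_inverse M = Some M'" by blast
  then have "M * M' = 1\<^sub>m k \<and> M' * M = 1\<^sub>m k \<and> M' \<in> carrier_mat k k"
    by (rule mat_inverse(2)[OF M])
  moreover have "minv M = M'" using M' by (simp add: minv_def)
  ultimately show "minv M \<in> carrier_mat k k" "M * minv M = 1\<^sub>m k" "minv M * M = 1\<^sub>m k" by simp_all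
qed

lemma cplx_carrier [simp]: "cplx M \<in> carrier_mat a b \<longleftrightarrow> M \<in> carrier_mat a b"
  by (simp add: cplx_def)

lemma cplx_mult:
  "M \<in> carrier_mat a b \<Longrightarrow> N \<in> carrier_mat b c \<Longrightarrow> cplx (M * N) = cplx M * cplx N"
  unfolding cplx_def by (rule of_real_hom.mat_hom_mult)

lemma cplx_minus:
  "M \<in> carrier_mat a b \<Longrightarrow> N \<in> carrier_mat a b \<Longrightarrow> cplx (M - N) = cplx M - cplx N"
  unfolding cplx_def by (intro eq_matI) auto

lemma cplx_transpose: "cplx (transpose_mat M) = transpose_mat (cplx M)"
  by (simp add: cplx_def map_mat_transpose)

lemma cplx_one: "cplx (1\<^sub>m k) = 1\<^sub>m k"
  unfolding cplx_def by (rule of_real_hom.mat_hom_one)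

lemma upper_triangular_jordan_matrix: "upper_triangular (jordan_matrix n_as)"
proof -
  have "dim_row (jordan_matrix n_as) = sum_list (map fst n_as)"
    by (rule carrier_matD(1)[OF jordan_matrix_carrier])
  then show ?thesis unfolding upper_triangular_def by (simp add: jordan_matrix_upper_triangular)
qed

lemma char_poly_cplx_minus_mult_of_invariant_range:
  fixes A U Y :: "real mat" and S S' :: "complex mat"
  assumes A: "A \<in> carrier_mat n n"
    and S: "S \<in> carrier_mat n n" "S' \<in> carrier_mat n n" "S * S' = 1\<^sub>m n" "S' * S = 1\<^sub>m n"
    and U: "U \<in> carrier_mat n r" "transpose_mat U * U = 1\<^sub>m r"
    and Y: "Y \<in> carrier_mat r n" and r: "r \<le> n"
    and J: "block_upper_triangular r (S' * cplx A * S)"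
    and U_lower: "\<forall>i j. r \<le> i \<and> i < n \<and> j < r \<longrightarrow> (S' * cplx U) $$ (i, j) = 0"
  shows "char_poly (cplx (A - U * Y))
    = char_poly (cplx (transpose_mat U * A * U - Y * U)) * char_poly (lower_right_block r (S' * cplx A * S))"
proof -
  have Ut: "transpose_mat U \<in> carrier_mat r n" using U(1) by simp
  have cU: "cplx U \<in> carrier_mat n r" "transpose_mat (cplx U) \<in> carrier_mat r n"
    and cA: "cplx A \<in> carrier_mat n n" and cY: "cplx Y \<in> carrier_mat r n"
    using A U(1) Y by simp_all
  have "transpose_mat (cplx U) * cplx U = 1\<^sub>m r"
    using cplx_mult[OF Ut U(1)] U(2) by (simp add: cplx_transpose cplx_one)
  then have "char_poly (cplx A - cplx U * cplx Y)
      = char_poly (transpose_mat (cplx U) * cplx A * cplx U - cplx Y * cplx U)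
        * char_poly (lower_right_block r (S' * cplx A * S))"
    using U_lower by (intro char_poly_minus_mult_of_invariant_range[OF cA S cU _ cY r J]) auto
  moreover have "cplx (A - U * Y) = cplx A - cplx U * cplx Y"
    using cplx_minus[OF A mult_carrier_mat[OF U(1) Y]] cplx_mult[OF U(1) Y] by simp
  moreover have "cplx (transpose_mat U * A * U - Y * U)
      = transpose_mat (cplx U) * cplx A * cplx U - cplx Y * cplx U"
    using cplx_minus[OF mult_carrier_mat[OF mult_carrier_mat[OF Ut A] U(1)] mult_carrier_mat[OF Y U(1)]]
      cplx_mult[OF mult_carrier_mat[OF Ut A] U(1)] cplx_mult[OF Ut A] cplx_mult[OF Y U(1)]
    by (simp add: cplx_transpose)
  ultimately show ?thesis by simp
qed

theorem proposition8:
  fixes A G C H U R :: "real mat" and \<Psi> :: "complex mat"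
    and n p q r :: nat and n_as :: "(nat \<times> complex) list" and lam :: "nat \<Rightarrow> complex"
  assumes A: "A \<in> carrier_mat n n" and G: "G \<in> carrier_mat n n"
    and C: "C \<in> carrier_mat p n" and H: "H \<in> carrier_mat p q"
    and HH: "pos_def_mat p (H * transpose_mat H)"
    and ctrb: "controllable A G" and obs: "observable A C"
    and r: "1 \<le> r" "r < n"
    \<comment> \<open>\<Psi>: invertible matrix of unit-norm generalized eigenvectors, \<Psi>^-1 A \<Psi> in Jordan form\<close>
    and Psi: "\<Psi> \<in> carrier_mat n n" "invertible_mat \<Psi>"
    and Psi_unit: "\<forall>j<n. (\<Sum>i<n. (cmod (\<Psi> $$ (i, j)))\<^sup>2) = 1"
    and Jordan: "minv \<Psi> * cplx A * \<Psi> = jordan_matrix n_as"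
    \<comment> \<open>the eigenvalues of A, with multiplicity, ordered by nonincreasing real part\<close>
    and lam_diag: "\<forall>i<n. jordan_matrix n_as $$ (i, i) = lam i"
    and lam_sorted: "\<forall>i j. i \<le> j \<and> j < n \<longrightarrow> Re (lam j) \<le> Re (lam i)"
    and gap: "Re (lam (r - 1)) > Re (lam r)"
    \<comment> \<open>U in the Stiefel manifold St(r,n), and U in the set \<U>\<close>
    and U: "U \<in> carrier_mat n r" "transpose_mat U * U = 1\<^sub>m r"
    and U_in: "\<forall>i j. r \<le> i \<and> i < n \<and> j < r \<longrightarrow> (minv \<Psi> * cplx U) $$ (i, j) = 0"
    \<comment> \<open>R: the positive definite solution of the reduced Riccati equation\<close>
    and R_pd: "pos_def_mat r R"
    and Ric: "(transpose_mat U * A * U) * R + R * transpose_mat (transpose_mat U * A * U)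
              + (transpose_mat U * G) * transpose_mat (transpose_mat U * G)
              - R * transpose_mat (C * U) * minv (H * transpose_mat H) * (C * U) * R = 0\<^sub>m r r"
  shows "char_poly (cplx (A - (U * R * transpose_mat U) * transpose_mat C * minv (H * transpose_mat H) * C))
       = char_poly (cplx (transpose_mat U * A * U - R * transpose_mat (C * U) * minv (H * transpose_mat H) * (C * U)))
         * (\<Prod>i\<in>{r..<n}. [:- lam i, 1:])"
proof -
  let ?W = "minv (H * transpose_mat H)"
  let ?J = "minv \<Psi> * cplx A * \<Psi>"
  define Y where "Y = R * transpose_mat U * transpose_mat C * ?W * C"
  have W: "?W \<in> carrier_mat p p"
    using minv_inverse(1)[OF mult_carrier_mat[OF H] pos_def_mat_det_nonzero[OF HH]] H by simp
  have R: "R \<in> carrier_mat r r" using R_pd by (simp add: pos_def_mat_def)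
  have Y: "Y \<in> carrier_mat r n"
    using R U(1) C W unfolding Y_def by (meson mult_carrier_mat transpose_carrier_mat)
  note dims = carrier_matD[OF C] carrier_matD[OF U(1)] carrier_matD[OF R] carrier_matD[OF W]
  have gain: "U * R * transpose_mat U * transpose_mat C * ?W * C = U * Y"
    using dims by (simp add: Y_def assoc_mult_mat_dims)
  have reduced_gain: "R * transpose_mat (C * U) * ?W * (C * U) = Y * U"
    using dims by (simp add: Y_def transpose_mult[OF C U(1)] assoc_mult_mat_dims)
  note \<Psi>_inverse = minv_inverse[OF Psi(1) invertible_mat_det_nonzero[OF Psi]]
  have J: "?J \<in> carrier_mat n n"
    using \<Psi>_inverse(1) A Psi(1) by (meson cplx_carrier mult_carrier_mat)
  have J_ut: "upper_triangular ?J" unfolding Jordan by (rule upper_triangular_jordan_matrix)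
  have "char_poly (cplx (A - U * Y))
      = char_poly (cplx (transpose_mat U * A * U - Y * U)) * char_poly (lower_right_block r ?J)"
    using r(2) by (intro char_poly_cplx_minus_mult_of_invariant_range[OF A Psi(1) \<Psi>_inverse U Y _ _ U_in]
        upper_triangular_imp_block_upper_triangular[OF J_ut]) simp
  moreover have "char_poly (lower_right_block r ?J) = (\<Prod>i\<in>{r..<n}. [:- lam i, 1:])"
    using char_poly_lower_right_block_upper_triangular[OF J J_ut] r lam_diag Jordan by simp
  ultimately show ?thesis unfolding gain reduced_gain by simp
qed

end
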